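(* Consider a prototypical cluster-randomized SMART with common cluster size $m$ and no covariates, analyzed with the cell-mean model, known weights and an exchangeable working covariance, as in the context. Fix an embedded DTR $(a_1,a_2)$. Assume: (a) consistency of potential outcomes; (b) $E_{a_1,a_2}\big[(\mathbf Y_i-\beta_{(a_1,a_2)}1_m)(\mathbf Y_i-\beta_{(a_1,a_2)}1_m)^T\mid R_i=0\big]\preceq \mathrm{Cov}_{a_1,a_2}(\mathbf Y_i)$ in the Loewner order; (c) $\mathrm{Cov}_{a_1,a_2}(\mathbf Y_i)=\sigma^2_{a_1,a_2}\,\mathrm{Exch}_m(\rho_{a_1,a_2})$. Then the asymptotic variance $\tau^2(a_1,a_2)$ of $\sqrt N\,\hat\beta_{(a_1,a_2)}$ satisfies $$\tau^2(a_1,a_2)\le \frac{2(2-p_{a_1})\,\sigma^2_{a_1,a_2}\,[1+(m-1)\rho_{a_1,a_2}]}{m}.$$ Consequently, fix $b_2,c_2\in\{1,-1\}$ and suppose the two DTRs $(1,b_2)$ and $(-1,c_2)$ share a common variance $\sigma^2$ and common ICC $\rho$. Then for any $\delta>0$ and $\alpha,\beta\in(0,1)$, $$\frac{(z_\beta+z_{\alpha/2})^2\,\big(\tau^2(1,b_2)+\tau^2(-1,c_2)\big)}{\delta^2\sigma^2}\;\le\;\frac{4(z_\beta+z_{\alpha/2})^2}{m\delta^2}\,\big(1+(m-1)\rho\big)\Big(1+\frac{(1-p_1)+(1-p_{-1})}{2}\Big).$$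
   Context: Prototypical cluster-randomized SMART. There are $N$ i.i.d. clusters, each with $m$ individuals and outcome vector $\mathbf Y_i\in\mathbb R^m$. - Stage 1: $A_{1i}\in\{1,-1\}$ is assigned with probability $1/2$ each. - A response indicator $R_i\in\{0,1\}$ is then observed, with $p_{a_1}=\Pr(R_i=1\mid A_{1i}=a_1)$. - Stage 2: non-responders ($R_i=0$) are re-randomized to $A_{2i}\in\{1,-1\}$ with probability $1/2$ each; responders are not re-randomized. There are four embedded DTRs $(a_1,a_2)\in\{1,-1\}^2$. A cluster is consistent with $(a_1,a_2)$ ($I_i(a_1,a_2)=1$) if $A_{1i}=a_1$ and either $R_i=1$, or $R_i=0$ and $A_{2i}=a_2$. The known weights are $W_i=2$ if $R_i=1$ and $W_i=4$ if $R_i=0$. $E_{a_1,a_2}$, $\mathrm{Cov}_{a_1,a_2}$ and $\Pr_{a_1,a_2}$ refer to the potential-outcome distribution had all clusters followed DTR $(a_1,a_2)$. For the non-responder conditioning in (b), $\Pr_{a_1,a_2}(R_i=1)=p_{a_1}$. The mean model is the cell-mean parameterization $E_{a_1,a_2}(Y_{ij})=\beta_{(a_1,a_2)}$, one parameter per DTR. It is estimated by solving $$\sum_i\sum_{(a_1,a_2)} I_i(a_1,a_2)\,W_i\,D_{(a_1,a_2)}^T V^{-1}\big(\mathbf Y_i-\beta_{(a_1,a_2)}1_m\big)=0,$$ where $D_{(a_1,a_2)}=1_m e_{(a_1,a_2)}^T$, with $e_{(a_1,a_2)}$ the unit vector picking out the DTR's parameter. The working covariance is $V=s^2\,\mathrm{Exch}_m(r)$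 (positive definite). Here $\mathrm{Exch}_m(r)$ denotes the $m\times m$ matrix with ones on the diagonal and $r$ off the diagonal, and $1_m$ is the all-ones vector. $\tau^2(a_1,a_2)$ is the $(a_1,a_2)$ diagonal entry of the sandwich matrix $J^{-1}AJ^{-1}$, where $J=E\sum I_i W_i D^TV^{-1}D$ and $A=E[U_iU_i^T]$, with $U_i$ the summand of the estimating equation evaluated at the true parameters. $z_\kappa$ denotes the upper $\kappa$ quantile of the standard normal distribution. *)

theory Defs
  imports "HOL-Probability.Probability"
begin

definition zq :: "real \<Rightarrow> real" where
  "zq \<kappa> = (THE x. (LBINT t:{x<..}. std_normal_density t) = \<kappa>)"

text \<open>Coding of treatment options: True ~ 1, False ~ -1.  DTRs are indexed by bool x bool.\<close>
definition enc :: "bool \<Rightarrow> int" where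
  "enc b = (if b then 1 else -1)"

definition dtr_of :: "int \<Rightarrow> int \<Rightarrow> bool \<times> bool" where
  "dtr_of a1 a2 = (a1 = 1, a2 = 1)"

definition exch :: "real \<Rightarrow> real^'m^'m" where
  "exch r = (\<chi> j k. if j = k then 1 else r)"

definition onesv :: "real^'m" where
  "onesv = (\<chi> j. 1)"

definition loewner_le :: "real^'m^'m \<Rightarrow> real^'m^'m \<Rightarrow> bool" where
  "loewner_le A B \<longleftrightarrow> (\<forall>v. v \<bullet> (A *v v) \<le> v \<bullet> (B *v v))"

definition pos_def :: "real^'m^'m \<Rightarrow> bool" where
  "pos_def V \<longleftrightarrow> (\<forall>v. v \<noteq> 0 \<longrightarrow> 0 < v \<bullet> (V *v v))"

definition Ind :: "('w \<Rightarrow> int) \<Rightarrow> ('w \<Rightarrow> int) \<Rightarrow> ('w \<Rightarrow> bool) \<Rightarrow> bool \<times> bool \<Rightarrow> 'w \<Rightarrow> real" where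
  "Ind A1 A2 R e \<omega> =
     (if A1 \<omega> = enc (fst e) \<and> (R \<omega> \<or> (\<not> R \<omega> \<and> A2 \<omega> = enc (snd e))) then 1 else 0)"

definition Wt :: "('w \<Rightarrow> bool) \<Rightarrow> 'w \<Rightarrow> real" where
  "Wt R \<omega> = (if R \<omega> then 2 else 4)"

definition Dmat :: "bool \<times> bool \<Rightarrow> real^(bool \<times> bool)^'m" where
  "Dmat e = (\<chi> j d. if d = e then 1 else 0)"

definition Ufun :: "('w \<Rightarrow> int) \<Rightarrow> ('w \<Rightarrow> int) \<Rightarrow> ('w \<Rightarrow> bool) \<Rightarrow> ('w \<Rightarrow> real^'m)
     \<Rightarrow> real^'m^'m \<Rightarrow> (bool \<times> bool \<Rightarrow> real) \<Rightarrow> 'w \<Rightarrow> real^(bool \<times> bool)" where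
  "Ufun A1 A2 R Y V \<beta> \<omega> =
     (\<Sum>e\<in>UNIV. (Ind A1 A2 R e \<omega> * Wt R \<omega>) *\<^sub>R
        (transpose (Dmat e) *v (matrix_inv V *v (Y \<omega> - \<beta> e *\<^sub>R onesv))))"

definition Jmat :: "'w measure \<Rightarrow> ('w \<Rightarrow> int) \<Rightarrow> ('w \<Rightarrow> int) \<Rightarrow> ('w \<Rightarrow> bool)
     \<Rightarrow> real^'m^'m \<Rightarrow> real^(bool \<times> bool)^(bool \<times> bool)" where
  "Jmat M A1 A2 R V = (\<chi> d d'. integral\<^sup>L M (\<lambda>\<omega>.
      \<Sum>e\<in>UNIV. Ind A1 A2 R e \<omega> * Wt R \<omega> *
        ((transpose (Dmat e :: real^(bool \<times> bool)^'m) ** matrix_inv V ** Dmat e) $ d $ d')))"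

definition Amat :: "'w measure \<Rightarrow> ('w \<Rightarrow> int) \<Rightarrow> ('w \<Rightarrow> int) \<Rightarrow> ('w \<Rightarrow> bool) \<Rightarrow> ('w \<Rightarrow> real^'m)
     \<Rightarrow> real^'m^'m \<Rightarrow> (bool \<times> bool \<Rightarrow> real) \<Rightarrow> real^(bool \<times> bool)^(bool \<times> bool)" where
  "Amat M A1 A2 R Y V \<beta> = (\<chi> d d'. integral\<^sup>L M (\<lambda>\<omega>.
      Ufun A1 A2 R Y V \<beta> \<omega> $ d * Ufun A1 A2 R Y V \<beta> \<omega> $ d'))"

definition tau2 :: "'w measure \<Rightarrow> ('w \<Rightarrow> int) \<Rightarrow> ('w \<Rightarrow> int) \<Rightarrow> ('w \<Rightarrow> bool) \<Rightarrow> ('w \<Rightarrow> real^'m)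
     \<Rightarrow> real^'m^'m \<Rightarrow> (int \<times> int \<Rightarrow> real) \<Rightarrow> int \<Rightarrow> int \<Rightarrow> real" where
  "tau2 M A1 A2 R Y V \<beta> a1 a2 =
     (let J = Jmat M A1 A2 R V;
          A = Amat M A1 A2 R Y V (\<lambda>e. \<beta> (enc (fst e), enc (snd e)))
      in (matrix_inv J ** A ** matrix_inv J) $ dtr_of a1 a2 $ dtr_of a1 a2)"

definition covmat :: "'w measure \<Rightarrow> ('w \<Rightarrow> real^'m) \<Rightarrow> real^'m^'m" where
  "covmat M X = (\<chi> j k. integral\<^sup>L M (\<lambda>\<omega>.
      (X \<omega> $ j - integral\<^sup>L M (\<lambda>\<eta>. X \<eta> $ j)) * (X \<omega> $ k - integral\<^sup>L M (\<lambda>\<eta>. X \<eta> $ k))))"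

definition cond_moment :: "'w measure \<Rightarrow> ('w \<Rightarrow> real^'m) \<Rightarrow> real \<Rightarrow> 'w set \<Rightarrow> real^'m^'m" where
  "cond_moment M X b E = (\<chi> j k.
      integral\<^sup>L M (\<lambda>\<omega>. indicator E \<omega> * ((X \<omega> $ j - b) * (X \<omega> $ k - b))) / measure M E)"

end

theory Submission
  imports Defs
begin

text \<open>
  With an exchangeable working covariance \<open>V = s\<^sup>2 Exch(r)\<close>, the vector \<open>1\<^sub>m\<close> is an
  eigenvector of \<open>V\<close> with eigenvalue \<open>c = s\<^sup>2 (1 + (m - 1) r)\<close>, so \<open>1\<^sub>m\<^sup>T V\<^sup>-\<^sup>1 = 1\<^sub>m\<^sup>T / c\<close>.
  Hence \<open>J = (m / c) I\<close> and the \<open>(a\<^sub>1,a\<^sub>2)\<close> component of \<open>U\<^sub>i\<close> is \<open>I\<^sub>i W\<^sub>i T\<^sub>i / c\<close>, where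
  \<open>T\<^sub>i\<close> is the sum over the cluster of the deviations of the potential outcomes under
  \<open>(a\<^sub>1,a\<^sub>2)\<close> from \<open>\<beta>\<close>; so \<open>\<tau>\<^sup>2 = E[I W\<^sup>2 T\<^sup>2] / m\<^sup>2\<close>.  Since the randomisation is
  independent of the potential outcomes, averaging \<open>I W\<^sup>2\<close> over the four equally
  likely assignments gives \<open>E[I W\<^sup>2 T\<^sup>2] = 2 E[T\<^sup>2] + 2 E[1{R = 0} T\<^sup>2]\<close>.  Testing the Loewner
  bound (b) on \<open>1\<^sub>m\<close> yields \<open>E[1{R = 0} T\<^sup>2] \<le> (1 - p) E[T\<^sup>2]\<close>, and by (c)
  \<open>E[T\<^sup>2] = 1\<^sub>m\<^sup>T Cov 1\<^sub>m = m \<sigma>\<^sup>2 (1 + (m - 1) \<rho>)\<close>.  The sample-size bound is then arithmetic.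
\<close>

subsection \<open>Exchangeable matrices and the all-ones vector\<close>

lemma exch_row_sum:
  "(\<Sum>k\<in>UNIV. (exch r :: real^'m^'m) $ j $ k) = 1 + (real CARD('m) - 1) * r"
proof -
  have "(\<Sum>k\<in>UNIV. (exch r :: real^'m^'m) $ j $ k) = (\<Sum>k\<in>UNIV. r + (if j = k then 1 - r else 0))"
    by (rule sum.cong) (auto simp: exch_def)
  also have "\<dots> = real CARD('m) * r + (1 - r)"
    by (simp add: sum.distrib)
  finally show ?thesis
    by (simp add: algebra_simps)
qed

lemma sum_exch_entries:
  "(\<Sum>j\<in>UNIV. \<Sum>k\<in>UNIV. (exch r :: real^'m^'m) $ j $ k) = real CARD('m) * (1 + (real CARD('m) - 1) * r)"
  by (simp add: exch_row_sum)

lemma scaleR_exch_mult_onesv: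
  "(c *\<^sub>R exch r :: real^'m^'m) *v onesv = (c * (1 + (real CARD('m) - 1) * r)) *\<^sub>R onesv"
  by (simp add: vec_eq_iff matrix_vector_mult_def onesv_def sum_distrib_left[symmetric] exch_row_sum)

lemma transpose_scaleR_exch: "transpose (c *\<^sub>R exch r :: real^'m^'m) = c *\<^sub>R exch r"
  by (simp add: vec_eq_iff transpose_def exch_def)

lemma inner_onesv: "onesv \<bullet> x = (\<Sum>j\<in>UNIV. (x :: real^'m) $ j)"
  by (simp add: inner_vec_def onesv_def)

lemma inner_onesv_mult_onesv: "onesv \<bullet> (A *v onesv) = (\<Sum>j\<in>UNIV. \<Sum>k\<in>UNIV. (A :: real^'m^'m) $ j $ k)"
  by (simp add: inner_vec_def onesv_def matrix_vector_mult_def)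

lemma onesv_nonzero: "(onesv :: real^'m) \<noteq> 0"
  by (simp add: onesv_def vec_eq_iff)

lemma invertible_matrix_inv:
  fixes A :: "'a::field^'n^'n"
  assumes "invertible A"
  shows "A ** matrix_inv A = mat 1" "matrix_inv A ** A = mat 1"
  using someI_ex[OF assms[unfolded invertible_def]] unfolding matrix_inv_def by blast+

lemma matrix_inv_eqI:
  fixes A B :: "'a::field^'n^'n"
  assumes AB: "A ** B = mat 1"
  shows "matrix_inv A = B"
proof -
  have "invertible A"
    using AB matrix_left_right_inverse unfolding invertible_def by blast
  have "matrix_inv A = matrix_inv A ** (A ** B)"
    by (simp add: AB)
  also have "\<dots> = B"
    by (metis matrix_mul_assoc matrix_mul_lid invertible_matrix_inv(2) \<open>invertible A\<close>)
  finally show ?thesis .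
qed

lemma matrix_inv_scalar_mat:
  assumes "c \<noteq> 0"
  shows "matrix_inv (c *\<^sub>R mat 1 :: real^'n^'n) = (1 / c) *\<^sub>R mat 1"
  using assms by (intro matrix_inv_eqI) (simp add: matrix_scalar_ac scalar_matrix_assoc[symmetric])

lemma scalar_mat_sandwich_diag:
  "((k *\<^sub>R mat 1) ** A ** (k *\<^sub>R mat 1)) $ e $ e = k\<^sup>2 * (A :: real^'n^'n) $ e $ e"
  by (simp add: matrix_scalar_ac scalar_matrix_assoc[symmetric] power2_eq_square)

lemma pos_def_invertible:
  fixes V :: "real^'m^'m"
  assumes pd: "pos_def V"
  shows "invertible V"
proof -
  have "inj ((*v) V)"
  proof (rule injI)
    fix x y
    assume "V *v x = V *v y"
    hence "(x - y) \<bullet> (V *v (x - y)) = 0"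
      by (simp add: matrix_vector_mult_diff_distrib)
    thus "x = y"
      using pd unfolding pos_def_def by (metis eq_iff_diff_eq_0 less_irrefl)
  qed
  thus ?thesis
    using matrix_left_invertible_injective invertible_left_inverse by blast
qed

lemma sum_matrix_inv_mult_eigen_onesv:
  fixes V :: "real^'m^'m"
  assumes inv: "invertible V" and sym: "transpose V = V"
    and eig: "V *v onesv = c *\<^sub>R onesv" and c: "c \<noteq> 0"
  shows "(\<Sum>j\<in>UNIV. (matrix_inv V *v x) $ j) = (\<Sum>j\<in>UNIV. x $ j) / c"
proof -
  have "c * (onesv \<bullet> (matrix_inv V *v x)) = (V *v onesv) \<bullet> (matrix_inv V *v x)"
    by (simp add: eig)
  also have "\<dots> = onesv \<bullet> (V *v (matrix_inv V *v x))"
    by (metis dot_lmul_matrix sym transpose_matrix_vector inner_commute)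
  also have "\<dots> = onesv \<bullet> x"
    by (simp add: matrix_vector_mul_assoc invertible_matrix_inv(1)[OF inv])
  finally show ?thesis
    using c by (simp add: inner_onesv field_simps)
qed

lemma exch_working_covariance:
  fixes V :: "real^'m^'m"
  assumes V: "V = s\<^sup>2 *\<^sub>R exch r" and pd: "pos_def V"
  defines "c \<equiv> s\<^sup>2 * (1 + (real CARD('m) - 1) * r)"
  shows "0 < c"
    and "(\<Sum>j\<in>UNIV. (matrix_inv V *v x) $ j) = (\<Sum>j\<in>UNIV. x $ j) / c"
    and "(\<Sum>j\<in>UNIV. \<Sum>k\<in>UNIV. matrix_inv V $ j $ k) = real CARD('m) / c"
proof -
  have eig: "V *v onesv = c *\<^sub>R onesv"
    unfolding V c_def by (rule scaleR_exch_mult_onesv)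
  have "0 < onesv \<bullet> (V *v onesv)"
    using pd onesv_nonzero unfolding pos_def_def by blast
  also have "onesv \<bullet> (V *v onesv) = c * real CARD('m)"
    unfolding eig by (simp add: inner_vec_def onesv_def)
  finally show c: "0 < c"
    by (simp add: zero_less_mult_iff)
  have sum_inv: "(\<Sum>j\<in>UNIV. (matrix_inv V *v x) $ j) = (\<Sum>j\<in>UNIV. x $ j) / c" for x
    using c by (intro sum_matrix_inv_mult_eigen_onesv pos_def_invertible[OF pd] eig)
      (simp_all add: V transpose_scaleR_exch)
  thus "(\<Sum>j\<in>UNIV. (matrix_inv V *v x) $ j) = (\<Sum>j\<in>UNIV. x $ j) / c" .
  show "(\<Sum>j\<in>UNIV. \<Sum>k\<in>UNIV. matrix_inv V $ j $ k) = real CARD('m) / c"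
    using sum_inv[of onesv] by (simp add: matrix_vector_mult_def onesv_def)
qed

subsection \<open>The estimating equation of the cell-mean model\<close>

lemma Ufun_component:
  "Ufun A1 A2 R Y V \<beta> \<omega> $ d
     = Ind A1 A2 R d \<omega> * Wt R \<omega> * (\<Sum>j\<in>UNIV. (matrix_inv V *v (Y \<omega> - \<beta> d *\<^sub>R onesv)) $ j)"
proof -
  have Dmat_col: "(v v* (Dmat e :: real^(bool \<times> bool)^'m)) $ d = (if e = d then (\<Sum>j\<in>UNIV. v $ j) else 0)"
    for e v
    by (auto simp: vector_matrix_mult_def Dmat_def)
  show ?thesis
    unfolding Ufun_def sum_component by (simp add: Dmat_col if_distrib[of "\<lambda>x. _ * x"] cong: if_cong)
qed

lemma Dmat_sandwich_component:
  "(transpose (Dmat e :: real^(bool \<times> bool)^'m) ** W ** Dmat e) $ d $ d'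
     = (if d = e \<and> d' = e then (\<Sum>j\<in>UNIV. \<Sum>k\<in>UNIV. W $ j $ k) else 0)"
  by (auto simp: matrix_matrix_mult_def transpose_def Dmat_def sum_distrib_right[symmetric]
      intro: sum.swap)

lemma Jmat_component:
  "Jmat M A1 A2 R V $ d $ d'
     = (if d = d' then (\<integral>\<omega>. Ind A1 A2 R d \<omega> * Wt R \<omega> \<partial>M) * (\<Sum>j\<in>UNIV. \<Sum>k\<in>UNIV. matrix_inv V $ j $ k)
        else 0)"
proof -
  have "(\<Sum>e\<in>UNIV. f e * (if d = e \<and> d' = e then c else 0)) = (if d = d' then f d * c else (0::real))"
    for f :: "bool \<times> bool \<Rightarrow> real" and c
    by (cases "d = d'") (auto simp: if_distrib[of "\<lambda>x. _ * x"] intro: sum.neutral cong: if_cong)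
  thus ?thesis
    unfolding Jmat_def by (simp add: Dmat_sandwich_component)
qed

lemma enc_dtr_of:
  "a1 \<in> {1, -1} \<Longrightarrow> enc (fst (dtr_of a1 a2)) = a1"
  "a2 \<in> {1, -1} \<Longrightarrow> enc (snd (dtr_of a1 a2)) = a2"
  by (auto simp: enc_def dtr_of_def)

lemma dtr_of_enc: "dtr_of (enc b1) (enc b2) = (b1, b2)"
  by (simp add: enc_def dtr_of_def)

lemma enc_range: "enc b \<in> {1, -1}"
  by (simp add: enc_def)

lemma integral_indicator_mult_indep:
  fixes X :: "'w \<Rightarrow> 'x" and g :: "'x \<Rightarrow> real"
  assumes P: "prob_space M" and X: "X \<in> measurable M S" and E: "E \<in> sets M"
    and indep: "\<forall>B\<in>sets S. measure M {\<omega>\<in>space M. \<omega> \<in> E \<and> X \<omega> \<in> B}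
                          = measure M E * measure M {\<omega>\<in>space M. X \<omega> \<in> B}"
    and g: "g \<in> borel_measurable S"
  shows "(\<integral>\<omega>. indicator E \<omega> * g (X \<omega>) \<partial>M) = measure M E * (\<integral>\<omega>. g (X \<omega>) \<partial>M)"
proof -
  interpret prob_space M by (rule P)
  define c where "c = measure M E"
  have c0: "c \<ge> 0"
    unfolding c_def by simp
  define N1 where "N1 = distr (density M (\<lambda>x. ennreal (indicator E x))) S X"
  define N2 where "N2 = density (distr M S X) (\<lambda>_. ennreal c)"
  have "N1 = N2"
  proof (rule measure_eqI)
    show "sets N1 = sets N2"
      unfolding N1_def N2_def by simp
    fix B
    assume "B \<in> sets N1"
    hence B: "B \<in> sets S"
      unfolding N1_def by simp
    have XB: "X -` B \<inter> space M \<in> sets M"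
      using X B by (rule measurable_sets)
    have "emeasure N1 B = emeasure (density M (indicator E)) (X -` B \<inter> space M)"
      unfolding N1_def using X B by (simp add: emeasure_distr ennreal_indicator)
    also have "\<dots> = emeasure M (E \<inter> (X -` B \<inter> space M))"
      by (rule emeasure_restricted[OF E XB])
    also have "\<dots> = ennreal (measure M {\<omega>\<in>space M. \<omega> \<in> E \<and> X \<omega> \<in> B})"
      by (simp add: emeasure_eq_measure) (rule arg_cong[where f="\<lambda>A. measure M A"], auto)
    also have "\<dots> = ennreal (c * measure M (X -` B \<inter> space M))"
      using indep B unfolding c_def by (simp add: vimage_def Int_def conj_commute)
    also have "\<dots> = ennreal c * emeasure (distr M S X) B"
      using X B c0 by (simp add: emeasure_distr emeasure_eq_measure ennreal_mult)
    also have "\<dots> = emeasure N2 B"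
      unfolding N2_def using B by (simp add: emeasure_density_const)
    finally show "emeasure N1 B = emeasure N2 B" .
  qed
  have "(\<integral>\<omega>. indicator E \<omega> * g (X \<omega>) \<partial>M) = (\<integral>\<omega>. g (X \<omega>) \<partial>density M (\<lambda>x. ennreal (indicator E x)))"
    using E X g by (subst integral_density) (auto intro: measurable_compose)
  also have "\<dots> = integral\<^sup>L N1 g"
    unfolding N1_def using X g by (subst integral_distr) auto
  also have "\<dots> = (\<integral>z. c * g z \<partial>distr M S X)"
    unfolding \<open>N1 = N2\<close> N2_def using X g c0 by (subst integral_density) auto
  also have "\<dots> = c * (\<integral>\<omega>. g (X \<omega>) \<partial>M)"
    using X g by (subst integral_distr) auto
  finally show ?thesis
    unfolding c_def .
qed

lemma borel_measurable_vec_nth: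
  "f \<in> borel_measurable M \<Longrightarrow> (\<lambda>\<omega>. (f \<omega> :: real^'n) $ j) \<in> borel_measurable M"
  by (rule measurable_compose[OF _ borel_measurable_continuous_onI[OF linear_continuous_on[OF bounded_linear_vec_nth]]])

lemma integrable_mult_square_integrable:
  fixes f g :: "'w \<Rightarrow> real"
  assumes "f \<in> borel_measurable M" "g \<in> borel_measurable M"
    and "integrable M (\<lambda>x. (f x)\<^sup>2)" "integrable M (\<lambda>x. (g x)\<^sup>2)"
  shows "integrable M (\<lambda>x. f x * g x)"
proof (rule Bochner_Integration.integrable_bound[where f="\<lambda>x. (f x)\<^sup>2 + (g x)\<^sup>2"])
  show "integrable M (\<lambda>x. (f x)\<^sup>2 + (g x)\<^sup>2)" "(\<lambda>x. f x * g x) \<in> borel_measurable M"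
    using assms by auto
  have "\<bar>f x * g x\<bar> \<le> (f x)\<^sup>2 + (g x)\<^sup>2" for x
  proof -
    have "2 * (\<bar>f x\<bar> * \<bar>g x\<bar>) \<le> (f x)\<^sup>2 + (g x)\<^sup>2"
      using sum_squares_bound[of "\<bar>f x\<bar>" "\<bar>g x\<bar>"] by (simp add: mult.assoc)
    moreover have "0 \<le> \<bar>f x\<bar> * \<bar>g x\<bar>"
      by simp
    ultimately show ?thesis
      unfolding abs_mult by linarith
  qed
  thus "AE x in M. norm (f x * g x) \<le> norm ((f x)\<^sup>2 + (g x)\<^sup>2)"
    by simp
qed

lemma integral_double_sum:
  assumes "finite I" "finite J" "\<And>x y. x \<in> I \<Longrightarrow> y \<in> J \<Longrightarrow> integrable M (G x y)"
  shows "(\<integral>\<omega>. (\<Sum>x\<in>I. \<Sum>y\<in>J. G x y \<omega>) \<partial>M) = (\<Sum>x\<in>I. \<Sum>y\<in>J. (\<integral>\<omega>. G x y \<omega> \<partial>M) :: real)"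
  using assms by (simp add: Bochner_Integration.integral_sum Bochner_Integration.integrable_sum)

lemma integrable_square_sum:
  fixes f :: "'n::finite \<Rightarrow> 'w \<Rightarrow> real"
  assumes "\<And>j k. integrable M (\<lambda>\<omega>. f j \<omega> * f k \<omega>)"
  shows "integrable M (\<lambda>\<omega>. (\<Sum>j\<in>UNIV. f j \<omega>)\<^sup>2)"
  unfolding power2_eq_square sum_product using assms by (intro Bochner_Integration.integrable_sum)

lemma integral_mult_square_sum:
  fixes f :: "'n::finite \<Rightarrow> 'w \<Rightarrow> real"
  assumes "\<And>j k. integrable M (\<lambda>\<omega>. g \<omega> * (f j \<omega> * f k \<omega>))"
  shows "(\<integral>\<omega>. g \<omega> * (\<Sum>j\<in>UNIV. f j \<omega>)\<^sup>2 \<partial>M) = (\<Sum>j\<in>UNIV. \<Sum>k\<in>UNIV. \<integral>\<omega>. g \<omega> * (f j \<omega> * f k \<omega>) \<partial>M)"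
proof -
  have "(\<integral>\<omega>. g \<omega> * (\<Sum>j\<in>UNIV. f j \<omega>)\<^sup>2 \<partial>M) = (\<integral>\<omega>. (\<Sum>j\<in>UNIV. \<Sum>k\<in>UNIV. g \<omega> * (f j \<omega> * f k \<omega>)) \<partial>M)"
    unfolding power2_eq_square sum_product by (simp add: sum_distrib_left)
  also have "\<dots> = (\<Sum>j\<in>UNIV. \<Sum>k\<in>UNIV. \<integral>\<omega>. g \<omega> * (f j \<omega> * f k \<omega>) \<partial>M)"
    using assms by (intro integral_double_sum) auto
  finally show ?thesis .
qed

subsection \<open>Potential outcomes and the weights of consistent clusters\<close>

text \<open>
  The potential outcomes of a cluster are packed as \<open>(Y(1,1), Y(1,-1), Y(-1,1), Y(-1,-1))\<close>
  and its potential responses as \<open>(R(1), R(-1))\<close>, as in the independence hypothesis.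
\<close>

definition po_outcome :: "int \<Rightarrow> int \<Rightarrow> 'v \<times> 'v \<times> 'v \<times> 'v \<Rightarrow> 'v" where
  "po_outcome a1 a2 y =
     (if a1 = 1 then (if a2 = 1 then fst y else fst (snd y))
      else (if a2 = 1 then fst (snd (snd y)) else snd (snd (snd y))))"

definition po_response :: "int \<Rightarrow> bool \<times> bool \<Rightarrow> bool" where
  "po_response a1 rr = (if a1 = 1 then fst rr else snd rr)"

text \<open>\<open>I\<^sub>i(a\<^sub>1,a\<^sub>2) W\<^sub>i\<close> for a cluster assigned \<open>(x, y)\<close> with potential responses \<open>rr\<close>.\<close>

definition consistent_weight :: "int \<Rightarrow> int \<Rightarrow> int \<Rightarrow> int \<Rightarrow> bool \<times> bool \<Rightarrow> real" where
  "consistent_weight x y a1 a2 rr =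
     (if x = a1 \<and> (po_response x rr \<or> y = a2) then (if po_response x rr then 2 else 4) else 0)"

lemma continuous_on_po_outcome:
  "continuous_on UNIV (po_outcome a1 a2 :: 'v::topological_space \<times> 'v \<times> 'v \<times> 'v \<Rightarrow> 'v)"
proof -
  have unfold: "po_outcome a1 a2 =
      (if a1 = 1 then (if a2 = 1 then (\<lambda>y. fst y) else (\<lambda>y. fst (snd y)))
       else (if a2 = 1 then (\<lambda>y. fst (snd (snd y))) else (\<lambda>y. snd (snd (snd y)))))"
    unfolding po_outcome_def by (simp add: fun_eq_iff)
  show ?thesis
    unfolding unfold by (auto intro!: continuous_intros)
qed

lemma sum_consistent_weight:
  "a1 \<in> {1, -1} \<Longrightarrow> a2 \<in> {1, -1} \<Longrightarrow>
     (\<Sum>x\<in>{1, -1::int}. \<Sum>y\<in>{1, -1::int}. consistent_weight x y a1 a2 rr) = 4"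
  by (auto simp: consistent_weight_def po_response_def)

lemma sum_consistent_weight_square:
  "a1 \<in> {1, -1} \<Longrightarrow> a2 \<in> {1, -1} \<Longrightarrow>
     (\<Sum>x\<in>{1, -1::int}. \<Sum>y\<in>{1, -1::int}. (consistent_weight x y a1 a2 rr)\<^sup>2)
       = (if po_response a1 rr then 8 else 16)"
  by (auto simp: consistent_weight_def po_response_def)

lemma abs_consistent_weight_le: "\<bar>consistent_weight x y a1 a2 rr\<bar> \<le> 4"
  by (simp add: consistent_weight_def)

lemma measurable_po_outcome_fst:
  "(\<lambda>z. po_outcome a1 a2 (fst z) :: 'v::topological_space) \<in> borel_measurable (borel \<Otimes>\<^sub>M N)"
  by (rule measurable_compose[OF measurable_fst borel_measurable_continuous_onI[OF continuous_on_po_outcome]])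

subsection \<open>The cluster-randomised SMART\<close>

locale cluster_smart =
  fixes M :: "'w measure"
    and A1 A2 :: "'w \<Rightarrow> int" and R :: "'w \<Rightarrow> bool" and Y :: "'w \<Rightarrow> real^'m"
    and Ypo :: "int \<times> int \<Rightarrow> 'w \<Rightarrow> real^'m" and Rpo :: "int \<Rightarrow> 'w \<Rightarrow> bool"
    and \<beta>c :: "int \<times> int \<Rightarrow> real" and p :: "int \<Rightarrow> real"
    and V :: "real^'m^'m" and s r :: real
  assumes M: "prob_space M"
    and A_vals: "\<forall>\<omega>\<in>space M. A1 \<omega> \<in> {1, -1} \<and> A2 \<omega> \<in> {1, -1}"
    and A_meas: "A1 \<in> measurable M (count_space UNIV)" "A2 \<in> measurable M (count_space UNIV)"
    and Rpo_meas: "\<forall>a1. Rpo a1 \<in> measurable M (count_space UNIV)"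
    and Ypo_meas: "\<forall>d. Ypo d \<in> borel_measurable M"
    and randomization: "\<forall>a1\<in>{1,-1}. \<forall>a2\<in>{1,-1}.
          measure M {\<omega>\<in>space M. A1 \<omega> = a1 \<and> A2 \<omega> = a2} = 1/4"
    and independence: "\<forall>a1 a2. \<forall>B\<in>sets (borel \<Otimes>\<^sub>M count_space UNIV).
          measure M {\<omega>\<in>space M. A1 \<omega> = a1 \<and> A2 \<omega> = a2 \<and>
             ((Ypo (1,1) \<omega>, Ypo (1,-1) \<omega>, Ypo (-1,1) \<omega>, Ypo (-1,-1) \<omega>), (Rpo 1 \<omega>, Rpo (-1) \<omega>)) \<in> B}
          = measure M {\<omega>\<in>space M. A1 \<omega> = a1 \<and> A2 \<omega> = a2}
            * measure M {\<omega>\<in>space M.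
             ((Ypo (1,1) \<omega>, Ypo (1,-1) \<omega>, Ypo (-1,1) \<omega>, Ypo (-1,-1) \<omega>), (Rpo 1 \<omega>, Rpo (-1) \<omega>)) \<in> B}"
    and consistency_R: "\<forall>\<omega>\<in>space M. R \<omega> = Rpo (A1 \<omega>) \<omega>"
    and consistency_Y: "\<forall>a1\<in>{1,-1}. \<forall>a2\<in>{1,-1}. \<forall>\<omega>\<in>space M.
          A1 \<omega> = a1 \<and> (R \<omega> \<or> (\<not> R \<omega> \<and> A2 \<omega> = a2)) \<longrightarrow> Y \<omega> = Ypo (a1, a2) \<omega>"
    and second_moments: "\<forall>a1\<in>{1,-1}. \<forall>a2\<in>{1,-1}. \<forall>j.
          integrable M (\<lambda>\<omega>. (Ypo (a1, a2) \<omega> $ j)\<^sup>2)"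
    and mean_model: "\<forall>a1\<in>{1,-1}. \<forall>a2\<in>{1,-1}. \<forall>j.
          integral\<^sup>L M (\<lambda>\<omega>. Ypo (a1, a2) \<omega> $ j) = \<beta>c (a1, a2)"
    and p_def: "\<forall>a1\<in>{1,-1}. p a1 =
          measure M {\<omega>\<in>space M. R \<omega> \<and> A1 \<omega> = a1} / measure M {\<omega>\<in>space M. A1 \<omega> = a1}"
    and V_def: "V = s\<^sup>2 *\<^sub>R exch r"
    and V_pd: "pos_def V"
begin

abbreviation potentials ::
    "'w \<Rightarrow> ((real^'m) \<times> (real^'m) \<times> (real^'m) \<times> (real^'m)) \<times> bool \<times> bool" where
  "potentials \<omega> \<equiv> ((Ypo (1,1) \<omega>, Ypo (1,-1) \<omega>, Ypo (-1,1) \<omega>, Ypo (-1,-1) \<omega>), (Rpo 1 \<omega>, Rpo (-1) \<omega>))"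

abbreviation cluster_dev :: "int \<Rightarrow> int \<Rightarrow> 'w \<Rightarrow> real" where
  "cluster_dev a1 a2 \<omega> \<equiv> \<Sum>j\<in>UNIV. Ypo (a1, a2) \<omega> $ j - \<beta>c (a1, a2)"

abbreviation nonresponders :: "int \<Rightarrow> 'w set" where
  "nonresponders a1 \<equiv> {\<omega>\<in>space M. \<not> Rpo a1 \<omega>}"

abbreviation beta_dtr :: "bool \<times> bool \<Rightarrow> real" where
  "beta_dtr \<equiv> \<lambda>e. \<beta>c (enc (fst e), enc (snd e))"

lemma po_outcome_potentials:
  "a1 \<in> {1, -1} \<Longrightarrow> a2 \<in> {1, -1} \<Longrightarrow> po_outcome a1 a2 (fst (potentials \<omega>)) = Ypo (a1, a2) \<omega>"
  unfolding po_outcome_def by (cases "a1 = 1"; cases "a2 = 1") auto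

lemma po_response_potentials: "a1 \<in> {1, -1} \<Longrightarrow> po_response a1 (snd (potentials \<omega>)) = Rpo a1 \<omega>"
  unfolding po_response_def by (cases "a1 = 1") auto

lemma potentials_measurable: "potentials \<in> measurable M (borel \<Otimes>\<^sub>M count_space UNIV)"
proof -
  have "(count_space UNIV :: (bool \<times> bool) measure) = count_space UNIV \<Otimes>\<^sub>M count_space UNIV"
    by (simp add: pair_measure_countable)
  hence "(\<lambda>\<omega>. (Rpo 1 \<omega>, Rpo (-1) \<omega>)) \<in> measurable M (count_space UNIV)"
    using Rpo_meas by (simp add: measurable_Pair)
  moreover have "(\<lambda>\<omega>. (Ypo (1,1) \<omega>, Ypo (1,-1) \<omega>, Ypo (-1,1) \<omega>, Ypo (-1,-1) \<omega>)) \<in> borel_measurable M"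
    using Ypo_meas by (intro borel_measurable_Pair) auto
  ultimately show ?thesis
    by (intro measurable_Pair)
qed

lemma assignment_sets: "{\<omega>\<in>space M. A1 \<omega> = x \<and> A2 \<omega> = y} \<in> sets M"
  using A_meas by measurable

lemma response_sets: "nonresponders a1 \<in> sets M" "{\<omega>\<in>space M. Rpo a1 \<omega>} \<in> sets M"
proof -
  have [measurable]: "Rpo a1 \<in> measurable M (count_space UNIV)"
    using Rpo_meas by blast
  show "nonresponders a1 \<in> sets M" "{\<omega>\<in>space M. Rpo a1 \<omega>} \<in> sets M"
    by measurable
qed

lemma integral_assignment_indicator:
  fixes g :: "_ \<Rightarrow> real"
  assumes x: "x \<in> {1, -1}" and y: "y \<in> {1, -1}"
    and g: "g \<in> borel_measurable (borel \<Otimes>\<^sub>M count_space UNIV)"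
  shows "(\<integral>\<omega>. indicator {\<omega>\<in>space M. A1 \<omega> = x \<and> A2 \<omega> = y} \<omega> * g (potentials \<omega>) \<partial>M)
           = 1/4 * (\<integral>\<omega>. g (potentials \<omega>) \<partial>M)"
proof -
  let ?E = "{\<omega>\<in>space M. A1 \<omega> = x \<and> A2 \<omega> = y}"
  have "\<forall>B\<in>sets (borel \<Otimes>\<^sub>M count_space UNIV).
          measure M {\<omega>\<in>space M. \<omega> \<in> ?E \<and> potentials \<omega> \<in> B}
            = measure M ?E * measure M {\<omega>\<in>space M. potentials \<omega> \<in> B}"
    using independence by (simp add: conj_assoc)
  hence "(\<integral>\<omega>. indicator ?E \<omega> * g (potentials \<omega>) \<partial>M) = measure M ?E * (\<integral>\<omega>. g (potentials \<omega>) \<partial>M)"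
    by (intro integral_indicator_mult_indep[OF M potentials_measurable assignment_sets _ g])
  also have "measure M ?E = 1/4"
    using randomization x y by blast
  finally show ?thesis .
qed

lemma integral_average_assignments:
  fixes F :: "int \<Rightarrow> int \<Rightarrow> ((real^'m) \<times> (real^'m) \<times> (real^'m) \<times> (real^'m)) \<times> bool \<times> bool \<Rightarrow> real"
  assumes meas: "\<And>x y. F x y \<in> borel_measurable (borel \<Otimes>\<^sub>M count_space UNIV)"
    and int: "\<And>x y. integrable M (\<lambda>\<omega>. F x y (potentials \<omega>))"
  shows "(\<integral>\<omega>. F (A1 \<omega>) (A2 \<omega>) (potentials \<omega>) \<partial>M)
           = 1/4 * (\<integral>\<omega>. (\<Sum>x\<in>{1, -1::int}. \<Sum>y\<in>{1, -1::int}. F x y (potentials \<omega>)) \<partial>M)"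
proof -
  let ?E = "\<lambda>x y. {\<omega>\<in>space M. A1 \<omega> = x \<and> A2 \<omega> = y}"
  have int_E: "integrable M (\<lambda>\<omega>. indicator (?E x y) \<omega> * F x y (potentials \<omega>))" for x y
    using integrable_real_mult_indicator[OF assignment_sets int] by (simp add: mult.commute)
  have "(\<integral>\<omega>. F (A1 \<omega>) (A2 \<omega>) (potentials \<omega>) \<partial>M)
      = (\<integral>\<omega>. (\<Sum>x\<in>{1, -1::int}. \<Sum>y\<in>{1, -1::int}. indicator (?E x y) \<omega> * F x y (potentials \<omega>)) \<partial>M)"
  proof (rule Bochner_Integration.integral_cong[OF refl])
    fix \<omega>
    assume "\<omega> \<in> space M"
    moreover have "A1 \<omega> \<in> {1, -1} \<and> A2 \<omega> \<in> {1, -1}" if "\<omega> \<in> space M"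
      using A_vals that by blast
    ultimately show "F (A1 \<omega>) (A2 \<omega>) (potentials \<omega>)
        = (\<Sum>x\<in>{1, -1::int}. \<Sum>y\<in>{1, -1::int}. indicator (?E x y) \<omega> * F x y (potentials \<omega>))"
      by (auto simp: indicator_def)
  qed
  also have "\<dots> = (\<Sum>x\<in>{1, -1::int}. \<Sum>y\<in>{1, -1::int}.
                      \<integral>\<omega>. indicator (?E x y) \<omega> * F x y (potentials \<omega>) \<partial>M)"
    using int_E by (intro integral_double_sum) auto
  also have "\<dots> = (\<Sum>x\<in>{1, -1::int}. \<Sum>y\<in>{1, -1::int}. 1/4 * (\<integral>\<omega>. F x y (potentials \<omega>) \<partial>M))"
    using integral_assignment_indicator[OF _ _ meas] by (intro sum.cong refl) auto
  also have "\<dots> = 1/4 * (\<Sum>x\<in>{1, -1::int}. \<Sum>y\<in>{1, -1::int}. \<integral>\<omega>. F x y (potentials \<omega>) \<partial>M)"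
    by (simp only: sum_distrib_left)
  also have "(\<Sum>x\<in>{1, -1::int}. \<Sum>y\<in>{1, -1::int}. \<integral>\<omega>. F x y (potentials \<omega>) \<partial>M)
      = (\<integral>\<omega>. (\<Sum>x\<in>{1, -1::int}. \<Sum>y\<in>{1, -1::int}. F x y (potentials \<omega>)) \<partial>M)"
    using int by (intro integral_double_sum[symmetric]) auto
  finally show ?thesis .
qed

lemma Ind_Wt_eq_consistent_weight:
  assumes "\<omega> \<in> space M" and a1: "a1 \<in> {1, -1}" and a2: "a2 \<in> {1, -1}"
  shows "Ind A1 A2 R (dtr_of a1 a2) \<omega> * Wt R \<omega>
           = consistent_weight (A1 \<omega>) (A2 \<omega>) a1 a2 (snd (potentials \<omega>))"
proof -
  have "R \<omega> = po_response (A1 \<omega>) (snd (potentials \<omega>))"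
    using assms consistency_R A_vals po_response_potentials by simp
  thus ?thesis
    unfolding Ind_def Wt_def consistent_weight_def enc_dtr_of[OF a1] enc_dtr_of[OF a2] by auto
qed

lemma integral_Ind_Wt: "(\<integral>\<omega>. Ind A1 A2 R d \<omega> * Wt R \<omega> \<partial>M) = 1"
proof -
  interpret prob_space M by (rule M)
  obtain b1 b2 where "d = (b1, b2)"
    by (cases d)
  then obtain a1 a2 where d: "d = dtr_of a1 a2" and a1: "a1 \<in> {1, -1}" and a2: "a2 \<in> {1, -1}"
    using dtr_of_enc enc_range by metis
  let ?F = "\<lambda>x y z. consistent_weight x y a1 a2 (snd z)"
  have meas: "?F x y \<in> borel_measurable (borel \<Otimes>\<^sub>M count_space UNIV)" for x y
    by (rule measurable_compose[OF measurable_snd]) simp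
  have "(\<integral>\<omega>. Ind A1 A2 R d \<omega> * Wt R \<omega> \<partial>M) = (\<integral>\<omega>. ?F (A1 \<omega>) (A2 \<omega>) (potentials \<omega>) \<partial>M)"
    unfolding d by (intro Bochner_Integration.integral_cong refl Ind_Wt_eq_consistent_weight a1 a2)
  also have "\<dots> = 1/4 * (\<integral>\<omega>. (\<Sum>x\<in>{1, -1::int}. \<Sum>y\<in>{1, -1::int}. ?F x y (potentials \<omega>)) \<partial>M)"
    using measurable_compose[OF potentials_measurable meas] abs_consistent_weight_le
    by (intro integral_average_assignments meas integrable_const_bound[where B=4]) auto
  also have "\<dots> = 1"
    using sum_consistent_weight[OF a1 a2] by (simp add: prob_space)
  finally show ?thesis .
qed

lemma Jmat_eq_scalar: "Jmat M A1 A2 R V = (real CARD('m) / (s\<^sup>2 * (1 + (real CARD('m) - 1) * r))) *\<^sub>R mat 1"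
  by (simp add: vec_eq_iff Jmat_component integral_Ind_Wt mat_def
      exch_working_covariance(3)[OF V_def V_pd])

lemma tau2_eq_second_moment:
  "tau2 M A1 A2 R Y V \<beta>c a1 a2
     = ((s\<^sup>2 * (1 + (real CARD('m) - 1) * r)) / real CARD('m))\<^sup>2 * (\<integral>\<omega>. (Ufun A1 A2 R Y V beta_dtr \<omega> $ dtr_of a1 a2)\<^sup>2 \<partial>M)"
proof -
  have "0 < real CARD('m) / (s\<^sup>2 * (1 + (real CARD('m) - 1) * r))"
    by (rule divide_pos_pos) (simp_all add: exch_working_covariance(1)[OF V_def V_pd])
  hence "real CARD('m) / (s\<^sup>2 * (1 + (real CARD('m) - 1) * r)) \<noteq> 0"
    by linarith
  thus ?thesis
    unfolding tau2_def Let_def Jmat_eq_scalar matrix_inv_scalar_mat[OF \<open>_ \<noteq> 0\<close>] scalar_mat_sandwich_diag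
    by (simp add: Amat_def power2_eq_square)
qed

lemma measure_assignment_event:
  fixes P :: "int \<Rightarrow> int \<Rightarrow> bool \<times> bool \<Rightarrow> bool"
  shows "measure M {\<omega>\<in>space M. P (A1 \<omega>) (A2 \<omega>) (snd (potentials \<omega>))}
           = 1/4 * (\<Sum>x\<in>{1, -1::int}. \<Sum>y\<in>{1, -1::int}. measure M {\<omega>\<in>space M. P x y (snd (potentials \<omega>))})"
proof -
  interpret prob_space M by (rule M)
  let ?F = "\<lambda>x y z. indicator {z. P x y (snd z)} z :: real"
  have meas: "?F x y \<in> borel_measurable (borel \<Otimes>\<^sub>M count_space UNIV)" for x y
    by (simp add: indicator_def measurable_compose[OF measurable_snd])
  have int: "integrable M (\<lambda>\<omega>. ?F x y (potentials \<omega>))" for x y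
    using measurable_compose[OF potentials_measurable meas]
    by (intro integrable_const_bound[where B=1]) auto
  have measure_eq: "measure M {\<omega>\<in>space M. Q \<omega>} = (\<integral>\<omega>. indicator {\<omega>\<in>space M. Q \<omega>} \<omega> \<partial>M)" for Q
    by (simp only: Bochner_Integration.integral_indicator) (metis (no_types, lifting) Int_absorb2 mem_Collect_eq subsetI)
  have "measure M {\<omega>\<in>space M. P (A1 \<omega>) (A2 \<omega>) (snd (potentials \<omega>))}
      = (\<integral>\<omega>. ?F (A1 \<omega>) (A2 \<omega>) (potentials \<omega>) \<partial>M)"
    unfolding measure_eq by (intro Bochner_Integration.integral_cong) (auto simp: indicator_def)
  also have "\<dots> = 1/4 * (\<integral>\<omega>. (\<Sum>x\<in>{1, -1::int}. \<Sum>y\<in>{1, -1::int}. ?F x y (potentials \<omega>)) \<partial>M)"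
    by (rule integral_average_assignments[OF meas int])
  also have "(\<integral>\<omega>. (\<Sum>x\<in>{1, -1::int}. \<Sum>y\<in>{1, -1::int}. ?F x y (potentials \<omega>)) \<partial>M)
      = (\<Sum>x\<in>{1, -1::int}. \<Sum>y\<in>{1, -1::int}. \<integral>\<omega>. ?F x y (potentials \<omega>) \<partial>M)"
    using int by (intro integral_double_sum) auto
  also have "\<dots> = (\<Sum>x\<in>{1, -1::int}. \<Sum>y\<in>{1, -1::int}. measure M {\<omega>\<in>space M. P x y (snd (potentials \<omega>))})"
    unfolding measure_eq by (intro sum.cong refl Bochner_Integration.integral_cong) (auto simp: indicator_def)
  finally show ?thesis .
qed

lemma response_prob:
  assumes a1: "a1 \<in> {1, -1}"
  shows "p a1 = measure M {\<omega>\<in>space M. Rpo a1 \<omega>}"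
proof -
  interpret prob_space M by (rule M)
  have "R \<omega> = po_response (A1 \<omega>) (snd (potentials \<omega>))" if "\<omega> \<in> space M" for \<omega>
    using that consistency_R A_vals po_response_potentials by simp
  hence "{\<omega>\<in>space M. R \<omega> \<and> A1 \<omega> = a1}
      = {\<omega>\<in>space M. A1 \<omega> = a1 \<and> po_response (A1 \<omega>) (snd (potentials \<omega>))}"
    by auto
  also have "measure M \<dots> = 1/2 * measure M {\<omega>\<in>space M. Rpo a1 \<omega>}"
  proof -
    have "{\<omega>\<in>space M. po_response a1 (snd (potentials \<omega>))} = {\<omega>\<in>space M. Rpo a1 \<omega>}"
      using po_response_potentials[OF a1] by simp
    thus ?thesis
      using a1 by (subst measure_assignment_event) auto
  qed
  finally have num: "measure M {\<omega>\<in>space M. R \<omega> \<and> A1 \<omega> = a1} = 1/2 * measure M {\<omega>\<in>space M. Rpo a1 \<omega>}" .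
  have den: "measure M {\<omega>\<in>space M. A1 \<omega> = a1} = 1/2"
    using measure_assignment_event[where P="\<lambda>x y rr. x = a1"] a1 by (auto simp: prob_space)
  have "p a1 = measure M {\<omega>\<in>space M. R \<omega> \<and> A1 \<omega> = a1} / measure M {\<omega>\<in>space M. A1 \<omega> = a1}"
    using p_def a1 by blast
  thus ?thesis
    unfolding num den by simp
qed

lemma integrable_dev_mult:
  assumes a1: "a1 \<in> {1, -1}" and a2: "a2 \<in> {1, -1}"
  shows "integrable M (\<lambda>\<omega>. (Ypo (a1, a2) \<omega> $ j - b) * (Ypo (a1, a2) \<omega> $ k - b))"
proof -
  interpret prob_space M by (rule M)
  have meas: "(\<lambda>\<omega>. Ypo (a1, a2) \<omega> $ j) \<in> borel_measurable M" for j
    using Ypo_meas by (simp add: borel_measurable_vec_nth)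
  have "integrable M (\<lambda>\<omega>. (Ypo (a1, a2) \<omega> $ j - b)\<^sup>2)" for j
  proof -
    have sq: "integrable M (\<lambda>\<omega>. (Ypo (a1, a2) \<omega> $ j)\<^sup>2)"
      using second_moments a1 a2 by blast
    hence "integrable M (\<lambda>\<omega>. (Ypo (a1, a2) \<omega> $ j)\<^sup>2 - 2 * b * Ypo (a1, a2) \<omega> $ j + b\<^sup>2)"
      using square_integrable_imp_integrable[OF meas sq] by auto
    thus ?thesis
      by (simp add: power2_diff algebra_simps)
  qed
  thus ?thesis
    using meas by (intro integrable_mult_square_integrable) auto
qed

lemma integrable_cluster_dev_square:
  "a1 \<in> {1, -1} \<Longrightarrow> a2 \<in> {1, -1} \<Longrightarrow> integrable M (\<lambda>\<omega>. (cluster_dev a1 a2 \<omega>)\<^sup>2)"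
  by (intro integrable_square_sum integrable_dev_mult)

lemma integrable_indicator_cluster_dev_square:
  assumes "a1 \<in> {1, -1}" "a2 \<in> {1, -1}" "N \<in> sets M"
  shows "integrable M (\<lambda>\<omega>. indicator N \<omega> * (cluster_dev a1 a2 \<omega>)\<^sup>2)"
  using integrable_real_mult_indicator[OF assms(3) integrable_cluster_dev_square[OF assms(1,2)]]
  by (simp add: mult.commute)

text \<open>The mean model is what centres the covariance at \<open>\<beta>\<close>.\<close>

lemma sum_covmat_eq:
  assumes a1: "a1 \<in> {1, -1}" and a2: "a2 \<in> {1, -1}"
  shows "(\<Sum>j\<in>UNIV. \<Sum>k\<in>UNIV. covmat M (Ypo (a1, a2)) $ j $ k) = (\<integral>\<omega>. (cluster_dev a1 a2 \<omega>)\<^sup>2 \<partial>M)"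
proof -
  have "(\<integral>\<omega>. (cluster_dev a1 a2 \<omega>)\<^sup>2 \<partial>M) = (\<integral>\<omega>. 1 * (cluster_dev a1 a2 \<omega>)\<^sup>2 \<partial>M)"
    by simp
  also have "\<dots> = (\<Sum>j\<in>UNIV. \<Sum>k\<in>UNIV.
      \<integral>\<omega>. 1 * ((Ypo (a1, a2) \<omega> $ j - \<beta>c (a1, a2)) * (Ypo (a1, a2) \<omega> $ k - \<beta>c (a1, a2))) \<partial>M)"
    by (rule integral_mult_square_sum) (simp add: integrable_dev_mult[OF a1 a2])
  also have "\<dots> = (\<Sum>j\<in>UNIV. \<Sum>k\<in>UNIV. covmat M (Ypo (a1, a2)) $ j $ k)"
  proof -
    have "integral\<^sup>L M (\<lambda>\<omega>. Ypo (a1, a2) \<omega> $ j) = \<beta>c (a1, a2)" for j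
      using mean_model a1 a2 by blast
    thus ?thesis
      by (simp add: covmat_def)
  qed
  finally show ?thesis
    by simp
qed

lemma sum_cond_moment_eq:
  assumes a1: "a1 \<in> {1, -1}" and a2: "a2 \<in> {1, -1}" and N: "N \<in> sets M"
  shows "(\<Sum>j\<in>UNIV. \<Sum>k\<in>UNIV. cond_moment M (Ypo (a1, a2)) (\<beta>c (a1, a2)) N $ j $ k)
           = (\<integral>\<omega>. indicator N \<omega> * (cluster_dev a1 a2 \<omega>)\<^sup>2 \<partial>M) / measure M N"
proof -
  have "(\<integral>\<omega>. indicator N \<omega> * (cluster_dev a1 a2 \<omega>)\<^sup>2 \<partial>M)
      = (\<Sum>j\<in>UNIV. \<Sum>k\<in>UNIV. \<integral>\<omega>. indicator N \<omega> *
           ((Ypo (a1, a2) \<omega> $ j - \<beta>c (a1, a2)) * (Ypo (a1, a2) \<omega> $ k - \<beta>c (a1, a2))) \<partial>M)"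
    using integrable_real_mult_indicator[OF N integrable_dev_mult[OF a1 a2]]
    by (intro integral_mult_square_sum) (simp add: mult.commute)
  thus ?thesis
    unfolding cond_moment_def by (simp add: sum_divide_distrib)
qed

lemma nonresponders_moment_le:
  assumes a1: "a1 \<in> {1, -1}" and a2: "a2 \<in> {1, -1}"
    and loewner: "loewner_le (cond_moment M (Ypo (a1, a2)) (\<beta>c (a1, a2)) (nonresponders a1))
                    (covmat M (Ypo (a1, a2)))"
  shows "(\<integral>\<omega>. indicator (nonresponders a1) \<omega> * (cluster_dev a1 a2 \<omega>)\<^sup>2 \<partial>M)
           \<le> measure M (nonresponders a1) * (\<integral>\<omega>. (cluster_dev a1 a2 \<omega>)\<^sup>2 \<partial>M)"
proof (cases "measure M (nonresponders a1) = 0")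
  case True
  interpret prob_space M by (rule M)
  have "nonresponders a1 \<in> null_sets M"
    using True response_sets(1) by (simp add: null_sets_def emeasure_eq_measure)
  hence "AE \<omega> in M. indicator (nonresponders a1) \<omega> * (cluster_dev a1 a2 \<omega>)\<^sup>2 = 0"
    by (rule AE_not_in[THEN eventually_mono]) simp
  hence "(\<integral>\<omega>. indicator (nonresponders a1) \<omega> * (cluster_dev a1 a2 \<omega>)\<^sup>2 \<partial>M) = (\<integral>\<omega>. 0 \<partial>M)"
    by (intro integral_cong_AE borel_measurable_integrable borel_measurable_const
        integrable_indicator_cluster_dev_square a1 a2 response_sets(1))
  thus ?thesis
    using True by simp
next
  case False
  hence "0 < measure M (nonresponders a1)"
    using measure_nonneg[of M "nonresponders a1"] by linarith
  moreover have "onesv \<bullet> (cond_moment M (Ypo (a1, a2)) (\<beta>c (a1, a2)) (nonresponders a1) *v onesv)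
      \<le> onesv \<bullet> (covmat M (Ypo (a1, a2)) *v onesv)"
    using loewner unfolding loewner_le_def by blast
  ultimately show ?thesis
    unfolding inner_onesv_mult_onesv sum_cond_moment_eq[OF a1 a2 response_sets(1)] sum_covmat_eq[OF a1 a2]
    by (simp add: pos_divide_le_eq mult.commute)
qed

lemma Ufun_component_eq:
  assumes \<omega>: "\<omega> \<in> space M" and a1: "a1 \<in> {1, -1}" and a2: "a2 \<in> {1, -1}"
  shows "Ufun A1 A2 R Y V beta_dtr \<omega> $ dtr_of a1 a2
           = consistent_weight (A1 \<omega>) (A2 \<omega>) a1 a2 (snd (potentials \<omega>)) * cluster_dev a1 a2 \<omega>
             / (s\<^sup>2 * (1 + (real CARD('m) - 1) * r))"
proof -
  let ?I = "Ind A1 A2 R (dtr_of a1 a2) \<omega>"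
  have consistent: "?I * (\<Sum>j\<in>UNIV. Y \<omega> $ j - \<beta>c (a1, a2)) = ?I * cluster_dev a1 a2 \<omega>"
  proof (cases "?I = 0")
    case False
    hence "A1 \<omega> = a1 \<and> (R \<omega> \<or> (\<not> R \<omega> \<and> A2 \<omega> = a2))"
      unfolding Ind_def enc_dtr_of[OF a1] enc_dtr_of[OF a2] by (auto split: if_splits)
    hence "Y \<omega> = Ypo (a1, a2) \<omega>"
      using consistency_Y a1 a2 \<omega> by blast
    thus ?thesis
      by simp
  qed simp
  have "(\<Sum>j\<in>UNIV. (Y \<omega> - \<beta>c (a1, a2) *\<^sub>R onesv) $ j) = (\<Sum>j\<in>UNIV. Y \<omega> $ j - \<beta>c (a1, a2))"
    by (simp add: onesv_def)
  hence "Ufun A1 A2 R Y V beta_dtr \<omega> $ dtr_of a1 a2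
      = Wt R \<omega> * (?I * (\<Sum>j\<in>UNIV. Y \<omega> $ j - \<beta>c (a1, a2))) / (s\<^sup>2 * (1 + (real CARD('m) - 1) * r))"
    unfolding Ufun_component exch_working_covariance(2)[OF V_def V_pd] enc_dtr_of[OF a1] enc_dtr_of[OF a2]
    by (simp add: ac_simps)
  also have "\<dots> = ?I * Wt R \<omega> * cluster_dev a1 a2 \<omega> / (s\<^sup>2 * (1 + (real CARD('m) - 1) * r))"
    unfolding consistent by (simp add: ac_simps)
  finally show ?thesis
    unfolding Ind_Wt_eq_consistent_weight[OF assms] .
qed

lemma integral_consistent_weight_square:
  assumes a1: "a1 \<in> {1, -1}" and a2: "a2 \<in> {1, -1}"
  shows "(\<integral>\<omega>. (consistent_weight (A1 \<omega>) (A2 \<omega>) a1 a2 (snd (potentials \<omega>)))\<^sup>2 * (cluster_dev a1 a2 \<omega>)\<^sup>2 \<partial>M)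
           = 2 * (\<integral>\<omega>. (cluster_dev a1 a2 \<omega>)\<^sup>2 \<partial>M)
             + 2 * (\<integral>\<omega>. indicator (nonresponders a1) \<omega> * (cluster_dev a1 a2 \<omega>)\<^sup>2 \<partial>M)"
proof -
  let ?F = "\<lambda>x y z. (consistent_weight x y a1 a2 (snd z))\<^sup>2
                    * (\<Sum>j\<in>UNIV. po_outcome a1 a2 (fst z) $ j - \<beta>c (a1, a2))\<^sup>2"
  have F_potentials: "?F x y (potentials \<omega>)
      = (consistent_weight x y a1 a2 (snd (potentials \<omega>)))\<^sup>2 * (cluster_dev a1 a2 \<omega>)\<^sup>2" for x y \<omega>
    by (simp only: po_outcome_potentials[OF a1 a2])
  have meas: "?F x y \<in> borel_measurable (borel \<Otimes>\<^sub>M count_space UNIV)" for x y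
  proof -
    have "(\<lambda>z. consistent_weight x y a1 a2 (snd z))
        \<in> borel_measurable (borel \<Otimes>\<^sub>M (count_space UNIV :: (bool \<times> bool) measure))"
      by (rule measurable_compose[OF measurable_snd]) simp
    thus ?thesis
      by (intro borel_measurable_times borel_measurable_power borel_measurable_sum borel_measurable_diff
          borel_measurable_vec_nth measurable_po_outcome_fst borel_measurable_const)
  qed
  have int: "integrable M (\<lambda>\<omega>. ?F x y (potentials \<omega>))" for x y
  proof (rule Bochner_Integration.integrable_bound)
    show "integrable M (\<lambda>\<omega>. 16 * (cluster_dev a1 a2 \<omega>)\<^sup>2)"
      using integrable_cluster_dev_square[OF a1 a2] by simp
    show "(\<lambda>\<omega>. ?F x y (potentials \<omega>)) \<in> borel_measurable M"
      by (rule measurable_compose[OF potentials_measurable meas])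
    have "(consistent_weight x y a1 a2 rr)\<^sup>2 \<le> 16" for rr
      by (simp add: consistent_weight_def)
    thus "AE \<omega> in M. norm (?F x y (potentials \<omega>)) \<le> norm (16 * (cluster_dev a1 a2 \<omega>)\<^sup>2)"
      unfolding F_potentials by (intro AE_I2) (simp add: mult_right_mono)
  qed
  have sum_F: "(\<Sum>x\<in>{1, -1::int}. \<Sum>y\<in>{1, -1::int}. ?F x y (potentials \<omega>))
      = 8 * (cluster_dev a1 a2 \<omega>)\<^sup>2 + 8 * (indicator (nonresponders a1) \<omega> * (cluster_dev a1 a2 \<omega>)\<^sup>2)"
    if "\<omega> \<in> space M" for \<omega>
    using that unfolding F_potentials sum_distrib_right[symmetric] sum_consistent_weight_square[OF a1 a2]
      po_response_potentials[OF a1] by (simp add: indicator_def)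
  have "(\<integral>\<omega>. (consistent_weight (A1 \<omega>) (A2 \<omega>) a1 a2 (snd (potentials \<omega>)))\<^sup>2 * (cluster_dev a1 a2 \<omega>)\<^sup>2 \<partial>M)
      = 1/4 * (\<integral>\<omega>. (\<Sum>x\<in>{1, -1::int}. \<Sum>y\<in>{1, -1::int}. ?F x y (potentials \<omega>)) \<partial>M)"
    unfolding F_potentials[symmetric] by (rule integral_average_assignments[OF meas int])
  also have "\<dots> = 1/4 * (\<integral>\<omega>. 8 * (cluster_dev a1 a2 \<omega>)\<^sup>2
                             + 8 * (indicator (nonresponders a1) \<omega> * (cluster_dev a1 a2 \<omega>)\<^sup>2) \<partial>M)"
    using sum_F by (simp cong: Bochner_Integration.integral_cong)
  also have "\<dots> = 2 * (\<integral>\<omega>. (cluster_dev a1 a2 \<omega>)\<^sup>2 \<partial>M)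
                 + 2 * (\<integral>\<omega>. indicator (nonresponders a1) \<omega> * (cluster_dev a1 a2 \<omega>)\<^sup>2 \<partial>M)"
    using integrable_cluster_dev_square[OF a1 a2] integrable_indicator_cluster_dev_square[OF a1 a2 response_sets(1)]
    by simp
  finally show ?thesis .
qed

lemma tau2_eq_moments:
  assumes a1: "a1 \<in> {1, -1}" and a2: "a2 \<in> {1, -1}"
  shows "tau2 M A1 A2 R Y V \<beta>c a1 a2
           = (2 * (\<integral>\<omega>. (cluster_dev a1 a2 \<omega>)\<^sup>2 \<partial>M)
              + 2 * (\<integral>\<omega>. indicator (nonresponders a1) \<omega> * (cluster_dev a1 a2 \<omega>)\<^sup>2 \<partial>M)) / (real CARD('m))\<^sup>2"
proof -
  let ?c = "s\<^sup>2 * (1 + (real CARD('m) - 1) * r)"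
  have "(\<integral>\<omega>. (Ufun A1 A2 R Y V beta_dtr \<omega> $ dtr_of a1 a2)\<^sup>2 \<partial>M)
      = (\<integral>\<omega>. (consistent_weight (A1 \<omega>) (A2 \<omega>) a1 a2 (snd (potentials \<omega>)))\<^sup>2
              * (cluster_dev a1 a2 \<omega>)\<^sup>2 \<partial>M) / ?c\<^sup>2"
    by (simp add: Ufun_component_eq[OF _ a1 a2] power_divide power_mult_distrib
        cong: Bochner_Integration.integral_cong)
  moreover have "s \<noteq> 0" "1 + (real CARD('m) - 1) * r \<noteq> 0"
    using exch_working_covariance(1)[OF V_def V_pd] by auto
  ultimately show ?thesis
    unfolding tau2_eq_second_moment integral_consistent_weight_square[OF a1 a2]
    by (simp add: power_divide)
qed

theorem tau2_le:
  assumes a1: "a1 \<in> {1, -1}" and a2: "a2 \<in> {1, -1}"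
    and loewner: "loewner_le (cond_moment M (Ypo (a1, a2)) (\<beta>c (a1, a2)) (nonresponders a1))
                    (covmat M (Ypo (a1, a2)))"
    and cov: "covmat M (Ypo (a1, a2)) = \<sigma>2 *\<^sub>R exch \<rho>"
  shows "tau2 M A1 A2 R Y V \<beta>c a1 a2 \<le> 2 * (2 - p a1) * \<sigma>2 * (1 + (real CARD('m) - 1) * \<rho>) / real CARD('m)"
proof -
  interpret prob_space M by (rule M)
  let ?m = "real CARD('m)"
  let ?K = "\<integral>\<omega>. (cluster_dev a1 a2 \<omega>)\<^sup>2 \<partial>M"
  have K: "?K = \<sigma>2 * (?m * (1 + (?m - 1) * \<rho>))"
    using sum_covmat_eq[OF a1 a2] unfolding cov by (simp add: sum_distrib_left[symmetric] sum_exch_entries)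
  have "nonresponders a1 = space M - {\<omega>\<in>space M. Rpo a1 \<omega>}"
    by auto
  hence "measure M (nonresponders a1) = 1 - p a1"
    using prob_compl[OF response_sets(2)] response_prob[OF a1] by simp
  hence "tau2 M A1 A2 R Y V \<beta>c a1 a2 \<le> (2 * ?K + 2 * ((1 - p a1) * ?K)) / ?m\<^sup>2"
    unfolding tau2_eq_moments[OF a1 a2]
    using nonresponders_moment_le[OF a1 a2 loewner] by (intro divide_right_mono) auto
  also have "\<dots> = 2 * (2 - p a1) * \<sigma>2 * (1 + (?m - 1) * \<rho>) / ?m"
    unfolding K by (simp add: power2_eq_square field_simps)
  finally show ?thesis .
qed

end

lemma scaled_variance_sum_le:
  fixes Z t1 t2 p1 p2 \<sigma>2 X m \<delta> :: real
  assumes t1: "t1 \<le> 2 * (2 - p1) * \<sigma>2 * X / m" and t2: "t2 \<le> 2 * (2 - p2) * \<sigma>2 * X / m"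
    and pos: "0 < \<sigma>2" "0 < \<delta>" "0 < m"
  shows "Z\<^sup>2 * (t1 + t2) / (\<delta>\<^sup>2 * \<sigma>2) \<le> 4 * Z\<^sup>2 / (m * \<delta>\<^sup>2) * X * (1 + ((1 - p1) + (1 - p2)) / 2)"
proof -
  have "Z\<^sup>2 * (t1 + t2) / (\<delta>\<^sup>2 * \<sigma>2)
      \<le> Z\<^sup>2 * (2 * (2 - p1) * \<sigma>2 * X / m + 2 * (2 - p2) * \<sigma>2 * X / m) / (\<delta>\<^sup>2 * \<sigma>2)"
    using t1 t2 pos by (intro divide_right_mono mult_left_mono) auto
  also have "\<dots> = 4 * Z\<^sup>2 / (m * \<delta>\<^sup>2) * X * (1 + ((1 - p1) + (1 - p2)) / 2)"
    using pos by (simp add: field_simps)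
  finally show ?thesis .
qed

theorem mainTheorem3:
  fixes M :: "'w measure"
    and A1 A2 :: "'w \<Rightarrow> int" and R :: "'w \<Rightarrow> bool" and Y :: "'w \<Rightarrow> real^'m"
    and Ypo :: "int \<times> int \<Rightarrow> 'w \<Rightarrow> real^'m" and Rpo :: "int \<Rightarrow> 'w \<Rightarrow> bool"
    and \<beta>c :: "int \<times> int \<Rightarrow> real" and p :: "int \<Rightarrow> real"
    and V :: "real^'m^'m" and s r :: real
  assumes M: "prob_space M"
    and A_vals: "\<forall>\<omega>\<in>space M. A1 \<omega> \<in> {1, -1} \<and> A2 \<omega> \<in> {1, -1}"
    and A_meas: "A1 \<in> measurable M (count_space UNIV)" "A2 \<in> measurable M (count_space UNIV)"
    and Rpo_meas: "\<forall>a1. Rpo a1 \<in> measurable M (count_space UNIV)"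
    and Ypo_meas: "\<forall>d. Ypo d \<in> borel_measurable M"
    and randomization: "\<forall>a1\<in>{1,-1}. \<forall>a2\<in>{1,-1}.
          measure M {\<omega>\<in>space M. A1 \<omega> = a1 \<and> A2 \<omega> = a2} = 1/4"
    and independence: "\<forall>a1 a2. \<forall>B\<in>sets (borel \<Otimes>\<^sub>M count_space UNIV).
          measure M {\<omega>\<in>space M. A1 \<omega> = a1 \<and> A2 \<omega> = a2 \<and>
             ((Ypo (1,1) \<omega>, Ypo (1,-1) \<omega>, Ypo (-1,1) \<omega>, Ypo (-1,-1) \<omega>), (Rpo 1 \<omega>, Rpo (-1) \<omega>)) \<in> B}
          = measure M {\<omega>\<in>space M. A1 \<omega> = a1 \<and> A2 \<omega> = a2}
            * measure M {\<omega>\<in>space M.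
             ((Ypo (1,1) \<omega>, Ypo (1,-1) \<omega>, Ypo (-1,1) \<omega>, Ypo (-1,-1) \<omega>), (Rpo 1 \<omega>, Rpo (-1) \<omega>)) \<in> B}"
    and consistency_R: "\<forall>\<omega>\<in>space M. R \<omega> = Rpo (A1 \<omega>) \<omega>"
    and consistency_Y: "\<forall>a1\<in>{1,-1}. \<forall>a2\<in>{1,-1}. \<forall>\<omega>\<in>space M.
          A1 \<omega> = a1 \<and> (R \<omega> \<or> (\<not> R \<omega> \<and> A2 \<omega> = a2)) \<longrightarrow> Y \<omega> = Ypo (a1, a2) \<omega>"
    and second_moments: "\<forall>a1\<in>{1,-1}. \<forall>a2\<in>{1,-1}. \<forall>j.
          integrable M (\<lambda>\<omega>. (Ypo (a1, a2) \<omega> $ j)\<^sup>2)"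
    and mean_model: "\<forall>a1\<in>{1,-1}. \<forall>a2\<in>{1,-1}. \<forall>j.
          integral\<^sup>L M (\<lambda>\<omega>. Ypo (a1, a2) \<omega> $ j) = \<beta>c (a1, a2)"
    and p_def: "\<forall>a1\<in>{1,-1}. p a1 =
          measure M {\<omega>\<in>space M. R \<omega> \<and> A1 \<omega> = a1} / measure M {\<omega>\<in>space M. A1 \<omega> = a1}"
    and V_def: "V = s\<^sup>2 *\<^sub>R exch r"
    and V_pd: "pos_def V"
  shows
    "(\<forall>a1 a2 \<sigma>2 \<rho>. a1 \<in> {1, -1} \<longrightarrow> a2 \<in> {1, -1} \<longrightarrow>
        loewner_le (cond_moment M (Ypo (a1, a2)) (\<beta>c (a1, a2)) {\<omega>\<in>space M. \<not> Rpo a1 \<omega>})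
                   (covmat M (Ypo (a1, a2))) \<longrightarrow>
        covmat M (Ypo (a1, a2)) = \<sigma>2 *\<^sub>R exch \<rho> \<longrightarrow>
        tau2 M A1 A2 R Y V \<beta>c a1 a2
          \<le> 2 * (2 - p a1) * \<sigma>2 * (1 + (real CARD('m) - 1) * \<rho>) / real CARD('m))
     \<and>
     (\<forall>b2 c2 \<sigma>2 \<rho> \<delta> \<alpha> \<beta>. b2 \<in> {1, -1} \<longrightarrow> c2 \<in> {1, -1} \<longrightarrow>
        loewner_le (cond_moment M (Ypo (1, b2)) (\<beta>c (1, b2)) {\<omega>\<in>space M. \<not> Rpo 1 \<omega>})
                   (covmat M (Ypo (1, b2))) \<longrightarrow>
        loewner_le (cond_moment M (Ypo (-1, c2)) (\<beta>c (-1, c2)) {\<omega>\<in>space M. \<not> Rpo (-1) \<omega>})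
                   (covmat M (Ypo (-1, c2))) \<longrightarrow>
        covmat M (Ypo (1, b2)) = \<sigma>2 *\<^sub>R exch \<rho> \<longrightarrow>
        covmat M (Ypo (-1, c2)) = \<sigma>2 *\<^sub>R exch \<rho> \<longrightarrow>
        0 < \<sigma>2 \<longrightarrow> 0 < \<delta> \<longrightarrow> 0 < \<alpha> \<longrightarrow> \<alpha> < 1 \<longrightarrow> 0 < \<beta> \<longrightarrow> \<beta> < 1 \<longrightarrow>
        (zq \<beta> + zq (\<alpha>/2))\<^sup>2 * (tau2 M A1 A2 R Y V \<beta>c 1 b2 + tau2 M A1 A2 R Y V \<beta>c (-1) c2)
            / (\<delta>\<^sup>2 * \<sigma>2)
          \<le> 4 * (zq \<beta> + zq (\<alpha>/2))\<^sup>2 / (real CARD('m) * \<delta>\<^sup>2)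
             * (1 + (real CARD('m) - 1) * \<rho>) * (1 + ((1 - p 1) + (1 - p (-1))) / 2))"
proof -
  interpret cluster_smart M A1 A2 R Y Ypo Rpo \<beta>c p V s r
    using assms by (rule cluster_smart.intro)
  show ?thesis
  proof (intro conjI allI impI)
    fix a1 a2 :: int and \<sigma>2 \<rho> :: real
    assume "a1 \<in> {1, -1}" "a2 \<in> {1, -1}"
      "loewner_le (cond_moment M (Ypo (a1, a2)) (\<beta>c (a1, a2)) {\<omega>\<in>space M. \<not> Rpo a1 \<omega>})
         (covmat M (Ypo (a1, a2)))"
      "covmat M (Ypo (a1, a2)) = \<sigma>2 *\<^sub>R exch \<rho>"
    thus "tau2 M A1 A2 R Y V \<beta>c a1 a2 \<le> 2 * (2 - p a1) * \<sigma>2 * (1 + (real CARD('m) - 1) * \<rho>) / real CARD('m)"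
      by (rule tau2_le)
  next
    fix b2 c2 :: int and \<sigma>2 \<rho> \<delta> \<alpha> \<beta> :: real
    assume "b2 \<in> {1, -1}" "c2 \<in> {1, -1}"
      and "loewner_le (cond_moment M (Ypo (1, b2)) (\<beta>c (1, b2)) {\<omega>\<in>space M. \<not> Rpo 1 \<omega>})
             (covmat M (Ypo (1, b2)))"
      and "loewner_le (cond_moment M (Ypo (-1, c2)) (\<beta>c (-1, c2)) {\<omega>\<in>space M. \<not> Rpo (-1) \<omega>})
             (covmat M (Ypo (-1, c2)))"
      and "covmat M (Ypo (1, b2)) = \<sigma>2 *\<^sub>R exch \<rho>" "covmat M (Ypo (-1, c2)) = \<sigma>2 *\<^sub>R exch \<rho>"
      and "0 < \<sigma>2" "0 < \<delta>"
    then show "(zq \<beta> + zq (\<alpha>/2))\<^sup>2 * (tau2 M A1 A2 R Y V \<beta>c 1 b2 + tau2 M A1 A2 R Y V \<beta>c (-1) c2)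
                / (\<delta>\<^sup>2 * \<sigma>2)
              \<le> 4 * (zq \<beta> + zq (\<alpha>/2))\<^sup>2 / (real CARD('m) * \<delta>\<^sup>2)
                 * (1 + (real CARD('m) - 1) * \<rho>) * (1 + ((1 - p 1) + (1 - p (-1))) / 2)"
      by (intro scaled_variance_sum_le tau2_le) auto
  qed
qed

end
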